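(* Let $x_1<x_2<\cdots<x_n$ be a partition of $[x_1,x_n]$, let $h_i=x_{i+1}-x_i$ for $i=1,\dots,n-1$, and $\hat h=\max_{1\le i\le n-1}h_i$. Let $f\in C^4([x_1,x_n])$ and let $L>0$ be such that $|f^{(4)}(x)|\le L$ for all $x\in[x_1,x_n]$. Write $f'_i=f'(x_i)$, $m_i=(f(x_{i+1})-f(x_i))/h_i$, $\lambda_i=\frac{h_{i+1}}{h_i+h_{i+1}}$ and $\mu_i=\frac{h_i}{h_i+h_{i+1}}$. Assume there exists $K>0$ such that $\hat h/h_j\le K$ for all $j=1,\dots,n-1$. For $2\le i\le n-1$ define $$R(i):=3\lambda_{i-1}m_{i-1}+3\mu_{i-1}m_i-\lambda_{i-1}f'_{i-1}-2f'_i-\mu_{i-1}f'_{i+1}.$$ Then for all $2\le i\le n-1$, $$|R(i)|\le\left(\frac{17K+K^2}{16}+1\right)L\,\hat h^3 .$$ *)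

theory Defs
  imports Complex_Main
begin

definition h :: "(nat \<Rightarrow> real) \<Rightarrow> nat \<Rightarrow> real" where
  "h x i = x (Suc i) - x i"

definition hmax :: "(nat \<Rightarrow> real) \<Rightarrow> nat \<Rightarrow> real" where
  "hmax x n = Max (h x ` {1..n-1})"

definition slope :: "(nat \<Rightarrow> real) \<Rightarrow> (real \<Rightarrow> real) \<Rightarrow> nat \<Rightarrow> real" where
  "slope x f i = (f (x (Suc i)) - f (x i)) / h x i"

definition lam :: "(nat \<Rightarrow> real) \<Rightarrow> nat \<Rightarrow> real" where
  "lam x i = h x (Suc i) / (h x i + h x (Suc i))"

definition mu :: "(nat \<Rightarrow> real) \<Rightarrow> nat \<Rightarrow> real" where
  "mu x i = h x i / (h x i + h x (Suc i))"

definition R :: "(nat \<Rightarrow> real) \<Rightarrow> (real \<Rightarrow> real) \<Rightarrow> (real \<Rightarrow> real) \<Rightarrow> nat \<Rightarrow> real" where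
  "R x f f1 i = 3 * lam x (i-1) * slope x f (i-1) + 3 * mu x (i-1) * slope x f i
     - lam x (i-1) * f1 (x (i-1)) - 2 * f1 (x i) - mu x (i-1) * f1 (x (Suc i))"

end

theory Submission
  imports Defs "HOL-Analysis.Analysis"
begin

text \<open>R(i) vanishes whenever f is a cubic polynomial. Expanding f and f' about the middle
  node x_i by Taylor's formula, only the remainders survive, and they are of order L h^3.\<close>

lemma partition_mono:
  fixes x :: "nat \<Rightarrow> real"
  assumes incr: "\<And>i. 1 \<le> i \<Longrightarrow> i < n \<Longrightarrow> x i < x (Suc i)"
    and "1 \<le> p" "p \<le> q" "q \<le> n"
  shows "x p \<le> x q"
  using \<open>p \<le> q\<close> \<open>q \<le> n\<close>
proof (induction q rule: dec_induct)
  case base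
  then show ?case by simp
next
  case (step q)
  then show ?case using incr[of q] \<open>1 \<le> p\<close> by fastforce
qed

lemma partition_node_mem:
  fixes x :: "nat \<Rightarrow> real"
  assumes incr: "\<And>i. 1 \<le> i \<Longrightarrow> i < n \<Longrightarrow> x i < x (Suc i)"
    and "1 \<le> p" "p \<le> n"
  shows "x p \<in> {x 1..x n}"
  using partition_mono[where x = x and n = n, OF incr] assms(2,3) by auto

lemma h_le_hmax:
  assumes "1 \<le> j" "j \<le> n - 1"
  shows "h x j \<le> hmax x n"
  unfolding hmax_def using assms by (intro Max_ge) auto

lemma taylor_quadratic_remainder:
  fixes g g1 g2 g3 :: "real \<Rightarrow> real"
  assumes S: "convex S"
    and "\<And>t. t \<in> S \<Longrightarrow> (g has_real_derivative g1 t) (at t within S)"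
    and "\<And>t. t \<in> S \<Longrightarrow> (g1 has_real_derivative g2 t) (at t within S)"
    and "\<And>t. t \<in> S \<Longrightarrow> (g2 has_real_derivative g3 t) (at t within S)"
    and bound: "\<And>t. t \<in> S \<Longrightarrow> \<bar>g3 t\<bar> \<le> L"
    and "w \<in> S" "z \<in> S"
  shows "\<bar>g z - (g w + g1 w * (z - w) + g2 w * (z - w)^2 / 2)\<bar> \<le> L * \<bar>z - w\<bar>^3 / 2"
proof -
  define F where "F = (!) [g, g1, g2, g3]"
  have "norm (F 0 z - (\<Sum>i\<le>2. F i w * (z - w)^i / fact i)) \<le> L * norm (z - w)^Suc 2 / fact 2"
  proof (rule field_Taylor[OF S])
    fix i :: nat and t assume "t \<in> S" "i \<le> 2"
    then show "(F i has_real_derivative F (Suc i) t) (at t within S)"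
      using assms(2-4) by (auto simp: F_def le_Suc_eq numeral_eq_Suc)
  qed (use bound assms(6,7) in \<open>auto simp: F_def numeral_eq_Suc\<close>)
  then show ?thesis
    by (simp add: F_def eval_nat_numeral atMost_Suc algebra_simps)
qed

lemma taylor_cubic_remainder:
  fixes g g1 g2 g3 g4 :: "real \<Rightarrow> real"
  assumes S: "convex S"
    and "\<And>t. t \<in> S \<Longrightarrow> (g has_real_derivative g1 t) (at t within S)"
    and "\<And>t. t \<in> S \<Longrightarrow> (g1 has_real_derivative g2 t) (at t within S)"
    and "\<And>t. t \<in> S \<Longrightarrow> (g2 has_real_derivative g3 t) (at t within S)"
    and "\<And>t. t \<in> S \<Longrightarrow> (g3 has_real_derivative g4 t) (at t within S)"
    and bound: "\<And>t. t \<in> S \<Longrightarrow> \<bar>g4 t\<bar> \<le> L"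
    and "w \<in> S" "z \<in> S"
  shows "\<bar>g z - (g w + g1 w * (z - w) + g2 w * (z - w)^2 / 2 + g3 w * (z - w)^3 / 6)\<bar>
           \<le> L * \<bar>z - w\<bar>^4 / 6"
proof -
  define F where "F = (!) [g, g1, g2, g3, g4]"
  have "norm (F 0 z - (\<Sum>i\<le>3. F i w * (z - w)^i / fact i)) \<le> L * norm (z - w)^Suc 3 / fact 3"
  proof (rule field_Taylor[OF S])
    fix i :: nat and t assume "t \<in> S" "i \<le> 3"
    then show "(F i has_real_derivative F (Suc i) t) (at t within S)"
      using assms(2-5) by (auto simp: F_def le_Suc_eq numeral_eq_Suc)
  qed (use bound assms(7,8) in \<open>auto simp: F_def numeral_eq_Suc\<close>)
  then show ?thesis
    by (simp add: F_def eval_nat_numeral atMost_Suc fact_numeral algebra_simps)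
qed

definition three_point_residual ::
    "real \<Rightarrow> real \<Rightarrow> (real \<Rightarrow> real) \<Rightarrow> (real \<Rightarrow> real) \<Rightarrow> real \<Rightarrow> real" where
  "three_point_residual a b g g' y =
     3 * (b / (a + b)) * ((g y - g (y - a)) / a) + 3 * (a / (a + b)) * ((g (y + b) - g y) / b)
     - (b / (a + b)) * g' (y - a) - 2 * g' y - (a / (a + b)) * g' (y + b)"

lemma R_eq_three_point_residual:
  "R x f f1 (Suc j) = three_point_residual (h x j) (h x (Suc j)) f f1 (x (Suc j))"
  by (simp add: R_def three_point_residual_def slope_def lam_def mu_def h_def)

lemma three_point_residual_eq_remainders:
  fixes g g' :: "real \<Rightarrow> real" and a b y c2 c3 :: real
  assumes "a > 0" "b > 0"
  defines "E1 \<equiv> g (y + b) - (g y + g' y * b + c2 * b^2 / 2 + c3 * b^3 / 6)"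
    and "E2 \<equiv> g (y - a) - (g y - g' y * a + c2 * a^2 / 2 - c3 * a^3 / 6)"
    and "E3 \<equiv> g' (y + b) - (g' y + c2 * b + c3 * b^2 / 2)"
    and "E4 \<equiv> g' (y - a) - (g' y - c2 * a + c3 * a^2 / 2)"
  shows "three_point_residual a b g g' y
           = (3 * a^2 * E1 - 3 * b^2 * E2 - a * b * (a * E3 + b * E4)) / (a * b * (a + b))"
  using assms unfolding three_point_residual_def
  by (simp add: divide_simps power2_eq_square power3_eq_cube) (simp add: algebra_simps)

lemma remainder_combination_bound:
  fixes a b E1 E2 E3 E4 L :: real
  assumes a: "a > 0" and b: "b > 0"
    and E1: "\<bar>E1\<bar> \<le> L * b^4 / 6" and E2: "\<bar>E2\<bar> \<le> L * a^4 / 6"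
    and E3: "\<bar>E3\<bar> \<le> L * b^3 / 2" and E4: "\<bar>E4\<bar> \<le> L * a^3 / 2"
  shows "\<bar>(3 * a^2 * E1 - 3 * b^2 * E2 - a * b * (a * E3 + b * E4)) / (a * b * (a + b))\<bar>
           \<le> L * max a b ^ 3"
proof -
  define H where "H = max a b"
  have H: "a \<le> H" "b \<le> H" "0 < H" using a by (auto simp: H_def)
  have "0 \<le> L * b^4" using abs_ge_zero[of E1] E1 by linarith
  then have L: "L \<ge> 0" using b by (simp add: zero_le_mult_iff)
  have "3 * a^2 * E1 - 3 * b^2 * E2 - a * b * (a * E3 + b * E4)
      = 3 * a^2 * E1 - 3 * b^2 * E2 - a^2 * b * E3 - a * b^2 * E4"
    by (simp add: algebra_simps power2_eq_square)
  then have "\<bar>3 * a^2 * E1 - 3 * b^2 * E2 - a * b * (a * E3 + b * E4)\<bar>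
      \<le> \<bar>3 * a^2 * E1\<bar> + \<bar>3 * b^2 * E2\<bar> + \<bar>a^2 * b * E3\<bar> + \<bar>a * b^2 * E4\<bar>"
    by arith
  also have "\<dots> = 3 * a^2 * \<bar>E1\<bar> + 3 * b^2 * \<bar>E2\<bar> + a^2 * b * \<bar>E3\<bar> + a * b^2 * \<bar>E4\<bar>"
    using a b by (simp add: abs_mult)
  also have "\<dots> \<le> 3 * a^2 * (L * b^4 / 6) + 3 * b^2 * (L * a^4 / 6)
      + a^2 * b * (L * b^3 / 2) + a * b^2 * (L * a^3 / 2)"
    using a b E1 E2 E3 E4 by (intro add_mono mult_left_mono) auto
  also have "\<dots> = a * b * (a + b) * (L * (a * b * (a^2 + b^2) / (a + b)))"
    using a b by (simp add: field_simps power2_eq_square power3_eq_cube eval_nat_numeral)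
  finally have "\<bar>(3 * a^2 * E1 - 3 * b^2 * E2 - a * b * (a * E3 + b * E4)) / (a * b * (a + b))\<bar>
      \<le> L * (a * b * (a^2 + b^2) / (a + b))"
    using a b by (simp add: abs_divide pos_divide_le_eq mult.commute)
  also have "\<dots> \<le> L * H^3"
  proof (rule mult_left_mono[OF _ L])
    have "a * b \<le> H * H" using a b by (simp add: H_def mult_mono)
    moreover have "a^2 + b^2 \<le> H * (a + b)"
      using a b by (simp add: H_def power2_eq_square distrib_left add_mono mult_right_mono)
    ultimately have "a * b * (a^2 + b^2) \<le> H * H * (H * (a + b))"
      using a b H by (metis mult_mono mult_nonneg_nonneg add_nonneg_nonneg zero_le_power2 less_imp_le)
    then show "a * b * (a^2 + b^2) / (a + b) \<le> H^3"
      using a b by (simp add: divide_le_eq power3_eq_cube mult.assoc)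
  qed
  finally show ?thesis unfolding H_def .
qed

lemma three_point_residual_bound:
  fixes g g1 g2 g3 g4 :: "real \<Rightarrow> real"
  assumes S: "convex S"
    and d1: "\<And>t. t \<in> S \<Longrightarrow> (g has_real_derivative g1 t) (at t within S)"
    and d2: "\<And>t. t \<in> S \<Longrightarrow> (g1 has_real_derivative g2 t) (at t within S)"
    and d3: "\<And>t. t \<in> S \<Longrightarrow> (g2 has_real_derivative g3 t) (at t within S)"
    and d4: "\<And>t. t \<in> S \<Longrightarrow> (g3 has_real_derivative g4 t) (at t within S)"
    and bound: "\<And>t. t \<in> S \<Longrightarrow> \<bar>g4 t\<bar> \<le> L"
    and a: "a > 0" and b: "b > 0"
    and mem: "y - a \<in> S" "y \<in> S" "y + b \<in> S"
  shows "\<bar>three_point_residual a b g g1 y\<bar> \<le> L * max a b ^ 3"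
  unfolding three_point_residual_eq_remainders[OF a b, of g g1 y "g2 y" "g3 y"]
proof (rule remainder_combination_bound[OF a b])
  show "\<bar>g (y + b) - (g y + g1 y * b + g2 y * b^2 / 2 + g3 y * b^3 / 6)\<bar> \<le> L * b^4 / 6"
    using taylor_cubic_remainder[OF S d1 d2 d3 d4 bound mem(2,3)] b by simp
  show "\<bar>g (y - a) - (g y - g1 y * a + g2 y * a^2 / 2 - g3 y * a^3 / 6)\<bar> \<le> L * a^4 / 6"
    using taylor_cubic_remainder[OF S d1 d2 d3 d4 bound mem(2,1)] a by (simp add: power2_eq_square power3_eq_cube)
  show "\<bar>g1 (y + b) - (g1 y + g2 y * b + g3 y * b^2 / 2)\<bar> \<le> L * b^3 / 2"
    using taylor_quadratic_remainder[OF S d2 d3 d4 bound mem(2,3)] b by simp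
  show "\<bar>g1 (y - a) - (g1 y - g2 y * a + g3 y * a^2 / 2)\<bar> \<le> L * a^3 / 2"
    using taylor_quadratic_remainder[OF S d2 d3 d4 bound mem(2,1)] a by (simp add: power2_eq_square)
qed

theorem lemma2:
  fixes x :: "nat \<Rightarrow> real" and n :: nat
    and f f1 f2 f3 f4 :: "real \<Rightarrow> real" and L K :: real
  assumes incr: "\<And>i. 1 \<le> i \<Longrightarrow> i < n \<Longrightarrow> x i < x (Suc i)"
    and d1: "\<And>t. t \<in> {x 1..x n} \<Longrightarrow> (f has_real_derivative f1 t) (at t within {x 1..x n})"
    and d2: "\<And>t. t \<in> {x 1..x n} \<Longrightarrow> (f1 has_real_derivative f2 t) (at t within {x 1..x n})"
    and d3: "\<And>t. t \<in> {x 1..x n} \<Longrightarrow> (f2 has_real_derivative f3 t) (at t within {x 1..x n})"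
    and d4: "\<And>t. t \<in> {x 1..x n} \<Longrightarrow> (f3 has_real_derivative f4 t) (at t within {x 1..x n})"
    and c4: "continuous_on {x 1..x n} f4"
    and Lpos: "L > 0"
    and Lbound: "\<And>t. t \<in> {x 1..x n} \<Longrightarrow> \<bar>f4 t\<bar> \<le> L"
    and Kpos: "K > 0"
    and Kbound: "\<And>j. 1 \<le> j \<Longrightarrow> j \<le> n - 1 \<Longrightarrow> hmax x n / h x j \<le> K"
  shows "\<forall>i. 2 \<le> i \<and> i \<le> n - 1 \<longrightarrow>
           \<bar>R x f f1 i\<bar> \<le> ((17 * K + K^2) / 16 + 1) * L * hmax x n ^ 3"
proof (intro allI impI)
  fix i assume "2 \<le> i \<and> i \<le> n - 1"
  then obtain j where i: "i = Suc j" and j: "1 \<le> j" "Suc (Suc j) \<le> n"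
    by (intro that[of "i - 1"]) auto
  define a b where "a = h x j" and "b = h x (Suc j)"
  have a: "a > 0" and b: "b > 0"
    using incr[of j] incr[of "Suc j"] j by (auto simp: a_def b_def h_def)
  have mem: "x (Suc j) - a \<in> {x 1..x n}" "x (Suc j) \<in> {x 1..x n}" "x (Suc j) + b \<in> {x 1..x n}"
    using partition_node_mem[where x = x and n = n, OF incr] j by (auto simp: a_def b_def h_def)
  have hmax: "a \<le> hmax x n" "b \<le> hmax x n"
    using j h_le_hmax[of j n x] h_le_hmax[of "Suc j" n x] by (auto simp: a_def b_def)
  have "\<bar>R x f f1 i\<bar> \<le> L * max a b ^ 3"
    unfolding i R_eq_three_point_residual a_def[symmetric] b_def[symmetric]
    by (rule three_point_residual_bound[OF _ d1 d2 d3 d4 Lbound a b mem]) simp_all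
  also have "\<dots> \<le> L * hmax x n ^ 3"
    using a b hmax Lpos by (auto intro!: mult_left_mono power_mono)
  also have "\<dots> \<le> ((17 * K + K^2) / 16 + 1) * L * hmax x n ^ 3"
  proof -
    have "0 \<le> L * hmax x n ^ 3" using a hmax Lpos by simp
    moreover have "1 \<le> (17 * K + K^2) / 16 + 1" using Kpos by simp
    ultimately show ?thesis by (metis mult_right_mono mult_1 mult.assoc)
  qed
  finally show "\<bar>R x f f1 i\<bar> \<le> ((17 * K + K^2) / 16 + 1) * L * hmax x n ^ 3" .
qed

end
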